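(* Let $p>r\geq2$ and let $A$ be a symmetric nonnegative $r$-matrix of order $n$ with no zero slices. If $\mathbf{x}\in\mathbb{R}^n$ is a nonnegative vector with $|\mathbf{x}|_p=1$ and $P_A(\mathbf{x})=\lambda^{(p)}(A)$, then $\mathbf{x}$ is positive.
   Context: A cubical $r$-matrix of order $n$ is a function $A$ on $[n]^r$ with entries $a_{i_1,\ldots,i_r}$; symmetric means invariant under permutations of indices. A slice of $A$ is the $(r-1)$-matrix obtained by fixing one index $i_k=s$; a zero slice is one all of whose entries are $0$. $P_A(\mathbf{x})=\sum a_{i_1,\ldots,i_r}x_{i_1}\cdots x_{i_r}$ and $\lambda^{(p)}(A)=\max\{P_A(\mathbf{x}):\mathbf{x}\in\mathbb{R}^n,\ |\mathbf{x}|_p=1\}$. *)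

theory Defs
  imports Complex_Main "HOL-Library.Multiset"
begin

text \<open>A cubical r-matrix of order n is a real function on index tuples; an index
tuple is a list of length r with entries in {0..<n} (indices are 0-based).
Vectors in R^n are functions nat => real, only coordinates below n matter.\<close>

definition idx :: "nat \<Rightarrow> nat \<Rightarrow> nat list set" where
  "idx r n = {is. length is = r \<and> set is \<subseteq> {..<n}}"

definition sym_matrix :: "nat \<Rightarrow> nat \<Rightarrow> (nat list \<Rightarrow> real) \<Rightarrow> bool" where
  "sym_matrix r n A \<longleftrightarrow>
     (\<forall>is\<in>idx r n. \<forall>js. mset js = mset is \<longrightarrow> A js = A is)"

definition nonneg_matrix :: "nat \<Rightarrow> nat \<Rightarrow> (nat list \<Rightarrow> real) \<Rightarrow> bool" where
  "nonneg_matrix r n A \<longleftrightarrow> (\<forall>is\<in>idx r n. 0 \<le> A is)"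

definition zero_slice :: "nat \<Rightarrow> nat \<Rightarrow> (nat list \<Rightarrow> real) \<Rightarrow> nat \<Rightarrow> nat \<Rightarrow> bool" where
  "zero_slice r n A k s \<longleftrightarrow> (\<forall>is\<in>idx r n. is ! k = s \<longrightarrow> A is = 0)"

definition no_zero_slices :: "nat \<Rightarrow> nat \<Rightarrow> (nat list \<Rightarrow> real) \<Rightarrow> bool" where
  "no_zero_slices r n A \<longleftrightarrow> (\<forall>k<r. \<forall>s<n. \<not> zero_slice r n A k s)"

definition polyform :: "nat \<Rightarrow> nat \<Rightarrow> (nat list \<Rightarrow> real) \<Rightarrow> (nat \<Rightarrow> real) \<Rightarrow> real" where
  "polyform r n A x = (\<Sum>is\<in>idx r n. A is * prod_list (map x is))"

definition pnorm :: "nat \<Rightarrow> real \<Rightarrow> (nat \<Rightarrow> real) \<Rightarrow> real" where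
  "pnorm n p x = (\<Sum>i<n. \<bar>x i\<bar> powr p) powr (1 / p)"

definition lambda_p :: "nat \<Rightarrow> nat \<Rightarrow> real \<Rightarrow> (nat list \<Rightarrow> real) \<Rightarrow> real" where
  "lambda_p r n p A = (SUP x\<in>{x. pnorm n p x = 1}. polyform r n A x)"

end

theory Submission
  imports Defs
begin

text \<open>If a nonnegative maximiser x had a zero coordinate s, raise every coordinate of x to at
least t > 0 and renormalise. Since the slice through s is not zero, some positive entry
A(i) with s among its indices contributes at least A(i) t^r to the form, while the
p-norm grows by at most n t^p and renormalising costs a factor of at most 1 + n t^p
(because r < p). As t^p = o(t^r), the normalised vector beats x for small t,
contradicting maximality. Only the zero slices at index position 0 and nonnegativity of A
are used.\<close>

lemma finite_idx: "finite (idx r n)"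
proof -
  have "idx r n = {xs. set xs \<subseteq> {..<n} \<and> length xs = r}" by (auto simp: idx_def)
  thus ?thesis using finite_lists_length_eq[of "{..<n}" r] by simp
qed

lemma prod_list_map_divide:
  "prod_list (map (\<lambda>j. y j / (c::real)) xs) = prod_list (map y xs) / c ^ length xs"
  by (induction xs) auto

lemma prod_list_mono:
  "(\<And>j. j \<in> set xs \<Longrightarrow> 0 \<le> f j \<and> f j \<le> (g j::real)) \<Longrightarrow>
    prod_list (map f xs) \<le> prod_list (map g xs)"
proof (induction xs)
  case (Cons a xs)
  have fa: "0 \<le> f a" "f a \<le> g a" "0 \<le> g a" using Cons.prems by (auto intro: order_trans)
  have "f a * prod_list (map f xs) \<le> g a * prod_list (map g xs)"
    using Cons fa by (intro mult_mono prod_list_nonneg) auto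
  then show ?case by simp
qed simp

lemma abs_prod_list_le_1:
  "(\<And>j. j \<in> set xs \<Longrightarrow> \<bar>g j\<bar> \<le> (1::real)) \<Longrightarrow> \<bar>prod_list (map g xs)\<bar> \<le> 1"
  by (induction xs) (auto simp: abs_mult mult_le_one)

lemma max_powr_le_add:
  fixes a t p :: real
  assumes "0 \<le> a" "0 \<le> t" "0 < p"
  shows "max a t powr p \<le> a powr p + t powr p"
  using assms by (cases "a \<le> t") (auto simp: max_def)

lemma powr_small_bound:
  fixes a c q :: real
  assumes "0 < a" "0 \<le> c" "0 < q"
  obtains t where "0 < t" "c * t powr q < a"
proof
  define t where "t = (a / (c + 1)) powr (1 / q)"
  show "0 < t" using assms by (simp add: t_def)
  have "c * t powr q = c * (a / (c + 1))" using assms by (simp add: t_def powr_powr)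
  also have "\<dots> < a" using assms by (simp add: field_simps)
  finally show "c * t powr q < a" .
qed

lemma pnorm_eq_1_iff:
  assumes "0 < p"
  shows "pnorm n p x = 1 \<longleftrightarrow> (\<Sum>i<n. \<bar>x i\<bar> powr p) = 1"
proof -
  let ?S = "\<Sum>i<n. \<bar>x i\<bar> powr p"
  have "(?S powr (1 / p)) powr p = ?S" using assms by (simp add: powr_powr sum_nonneg)
  then show ?thesis unfolding pnorm_def by auto
qed

lemma pnorm_normalize:
  fixes y :: "nat \<Rightarrow> real"
  assumes "0 < p" and S: "0 < (\<Sum>i<n. \<bar>y i\<bar> powr p)"
  shows "pnorm n p (\<lambda>j. y j / (\<Sum>i<n. \<bar>y i\<bar> powr p) powr (1 / p)) = 1"
proof -
  let ?S = "\<Sum>i<n. \<bar>y i\<bar> powr p"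
  have "(\<Sum>i<n. \<bar>y i / ?S powr (1 / p)\<bar> powr p) = (\<Sum>i<n. \<bar>y i\<bar> powr p / ?S)"
    using assms by (intro sum.cong) (auto simp: abs_divide powr_divide powr_powr)
  also have "\<dots> = 1" using S by (simp add: sum_divide_distrib[symmetric])
  finally show ?thesis using assms by (simp add: pnorm_eq_1_iff)
qed

lemma abs_le_1_if_pnorm_eq_1:
  assumes "0 < p" "pnorm n p x = 1" "i < n"
  shows "\<bar>x i\<bar> \<le> 1"
proof (rule ccontr)
  assume "\<not> \<bar>x i\<bar> \<le> 1"
  then have "1 < \<bar>x i\<bar> powr p" using powr_less_mono2[of p 1 "\<bar>x i\<bar>"] assms(1) by simp
  moreover have "\<bar>x i\<bar> powr p \<le> (\<Sum>i<n. \<bar>x i\<bar> powr p)"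
    by (rule member_le_sum) (use assms in auto)
  ultimately show False using assms by (simp add: pnorm_eq_1_iff)
qed

lemma polyform_le_lambda_p:
  assumes "0 < p" "pnorm n p x = 1"
  shows "polyform r n A x \<le> lambda_p r n p A"
proof -
  have "polyform r n A y \<le> (\<Sum>is\<in>idx r n. \<bar>A is\<bar>)" if "pnorm n p y = 1" for y
    unfolding polyform_def
  proof (rule sum_mono)
    fix "is" assume "is \<in> idx r n"
    then have "\<bar>prod_list (map y is)\<bar> \<le> 1"
      using that assms(1) by (intro abs_prod_list_le_1 abs_le_1_if_pnorm_eq_1) (auto simp: idx_def)
    then have "\<bar>A is * prod_list (map y is)\<bar> \<le> \<bar>A is\<bar>" by (simp add: abs_mult mult_left_le)
    then show "A is * prod_list (map y is) \<le> \<bar>A is\<bar>" by simp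
  qed
  then have "bdd_above (polyform r n A ` {y. pnorm n p y = 1})" by (intro bdd_aboveI2) auto
  then show ?thesis unfolding lambda_p_def using assms(2) by (intro cSUP_upper) auto
qed

lemma polyform_divide:
  "polyform r n A (\<lambda>j. y j / c) = polyform r n A y / c ^ r"
  by (simp add: polyform_def prod_list_map_divide sum_divide_distrib idx_def)

lemma polyform_nonneg:
  assumes "nonneg_matrix r n A" "\<And>i. i < n \<Longrightarrow> 0 \<le> x i"
  shows "0 \<le> polyform r n A x"
  unfolding polyform_def using assms
  by (intro sum_nonneg mult_nonneg_nonneg prod_list_nonneg)
     (auto simp: nonneg_matrix_def idx_def)

lemma polyform_increase:
  assumes "nonneg_matrix r n A" "\<And>i. i < n \<Longrightarrow> 0 \<le> x i \<and> x i \<le> y i" "is \<in> idx r n"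
  shows "polyform r n A x + A is * (prod_list (map y is) - prod_list (map x is))
           \<le> polyform r n A y"
proof -
  define gain where "gain js = A js * (prod_list (map y js) - prod_list (map x js))" for js
  have gain_nonneg: "0 \<le> gain js" if "js \<in> idx r n" for js
  proof -
    have "prod_list (map x js) \<le> prod_list (map y js)"
      using that assms(2) by (intro prod_list_mono) (auto simp: idx_def)
    then show ?thesis using that assms(1) by (simp add: gain_def nonneg_matrix_def)
  qed
  have "gain is \<le> sum gain (idx r n)"
    using assms(3) gain_nonneg finite_idx by (intro member_le_sum) auto
  also have "\<dots> = polyform r n A y - polyform r n A x"
    by (simp add: gain_def polyform_def sum_subtractf right_diff_distrib)
  finally show ?thesis by (simp add: gain_def)
qed

lemma positive_entry_through_index:
  assumes "nonneg_matrix r n A" "no_zero_slices r n A" "0 < r" "s < n"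
  obtains "is" where "is \<in> idx r n" "s \<in> set is" "0 < A is"
proof -
  obtain "is" where "is": "is \<in> idx r n" "is ! 0 = s" "A is \<noteq> 0"
    using assms(2-4) by (auto simp: no_zero_slices_def zero_slice_def)
  then have "s \<in> set is" using assms(3) by (auto simp: idx_def)
  moreover have "0 < A is" using "is" assms(1) by (auto simp: nonneg_matrix_def order_le_less)
  ultimately show thesis using "is"(1) that by blast
qed

lemma polyform_max_const_gain:
  assumes A: "nonneg_matrix r n A" and "is": "is \<in> idx r n" "s \<in> set is"
    and x: "\<And>i. i < n \<Longrightarrow> 0 \<le> x i" "x s = 0" and "0 \<le> t"
  shows "polyform r n A x + A is * t ^ r \<le> polyform r n A (\<lambda>j. max (x j) t)"
proof -
  let ?y = "\<lambda>j. max (x j) t"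
  have "t ^ r \<le> prod_list (map ?y is)"
  proof -
    have "prod_list (map (\<lambda>_. t) is) \<le> prod_list (map ?y is)"
      using \<open>0 \<le> t\<close> by (intro prod_list_mono) auto
    then show ?thesis using "is"(1) by (simp add: map_replicate_const idx_def)
  qed
  moreover have "prod_list (map x is) = 0" using "is"(2) x(2) by (simp add: prod_list_zero_iff)
  moreover have "0 \<le> A is" using A "is"(1) by (simp add: nonneg_matrix_def)
  ultimately have "A is * t ^ r \<le> A is * (prod_list (map ?y is) - prod_list (map x is))"
    by (simp add: mult_left_mono)
  moreover have "polyform r n A x + A is * (prod_list (map ?y is) - prod_list (map x is))
                   \<le> polyform r n A ?y"
    by (rule polyform_increase[OF A]) (use x(1) "is"(1) in auto)
  ultimately show ?thesis by linarith
qed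

lemma powr_sum_max_const_bounds:
  fixes x :: "nat \<Rightarrow> real"
  assumes "\<And>i. i < n \<Longrightarrow> 0 \<le> x i" "pnorm n p x = 1" "0 \<le> t" "0 < p"
  shows "1 \<le> (\<Sum>i<n. \<bar>max (x i) t\<bar> powr p)"
    and "(\<Sum>i<n. \<bar>max (x i) t\<bar> powr p) \<le> 1 + real n * t powr p"
proof -
  have x_sum: "(\<Sum>i<n. \<bar>x i\<bar> powr p) = 1" using assms(2,4) by (simp add: pnorm_eq_1_iff)
  have "(\<Sum>i<n. \<bar>x i\<bar> powr p) \<le> (\<Sum>i<n. \<bar>max (x i) t\<bar> powr p)"
    using assms(1,4) by (intro sum_mono powr_mono2) auto
  then show "1 \<le> (\<Sum>i<n. \<bar>max (x i) t\<bar> powr p)" using x_sum by simp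
  have "(\<Sum>i<n. \<bar>max (x i) t\<bar> powr p) \<le> (\<Sum>i<n. \<bar>x i\<bar> powr p + t powr p)"
    using assms by (intro sum_mono) (simp add: max_powr_le_add)
  then show "(\<Sum>i<n. \<bar>max (x i) t\<bar> powr p) \<le> 1 + real n * t powr p"
    using x_sum by (simp add: sum.distrib)
qed

lemma polyform_normalize_gt:
  fixes y :: "nat \<Rightarrow> real" and n :: nat and p :: real
  defines "S \<equiv> \<Sum>i<n. \<bar>y i\<bar> powr p"
  assumes "0 < p" "real r \<le> p" "1 \<le> S" "0 \<le> P" "P * S < polyform r n A y"
  shows "P < polyform r n A (\<lambda>j. y j / S powr (1 / p))"
proof -
  have "(S powr (1 / p)) ^ r = S powr (r / p)"
    using assms(4) by (simp add: powr_realpow[symmetric] powr_powr)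
  also have "\<dots> \<le> S powr 1" using assms(2-4) by (intro powr_mono) auto
  finally have "P * (S powr (1 / p)) ^ r \<le> P * S"
    using assms(4,5) by (simp add: mult_left_mono)
  then have "P * (S powr (1 / p)) ^ r < polyform r n A y" using assms(6) by linarith
  moreover have "0 < (S powr (1 / p)) ^ r" using assms(4) by simp
  ultimately show ?thesis unfolding polyform_divide by (simp add: pos_less_divide_eq)
qed

text \<open>The gain A(is) t^r beats the loss P n t^p from renormalising because t^p = t^r t^(p-r)
and t is chosen with P n t^(p-r) < A(is).\<close>

lemma polyform_increases_at_zero_coordinate:
  assumes rp: "0 < r" "real r < p"
    and A: "nonneg_matrix r n A" and "is": "is \<in> idx r n" "s \<in> set is" "0 < A is"
    and x: "\<And>i. i < n \<Longrightarrow> 0 \<le> x i" "pnorm n p x = 1" "x s = 0"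
  obtains z where "pnorm n p z = 1" "polyform r n A x < polyform r n A z"
proof -
  have p: "0 < p" using rp by linarith
  define P where "P = polyform r n A x"
  have P_nonneg: "0 \<le> P" unfolding P_def using A x(1) by (rule polyform_nonneg)
  obtain t where t: "0 < t" and small: "P * real n * t powr (p - r) < A is"
    using powr_small_bound[of "A is" "P * real n" "p - r"] "is"(3) P_nonneg rp by auto
  define y where "y = (\<lambda>j. max (x j) t)"
  define S where "S = (\<Sum>i<n. \<bar>y i\<bar> powr p)"
  have S: "1 \<le> S" "S \<le> 1 + real n * t powr p"
    unfolding S_def y_def using powr_sum_max_const_bounds[of n x p t] x t p by auto
  have "P * S \<le> P + t ^ r * (P * real n * t powr (p - r))"
  proof -
    have "t powr p = t ^ r * t powr (p - r)"
      using t by (simp add: powr_add[symmetric] powr_realpow[symmetric])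
    then show ?thesis using mult_left_mono[OF S(2) P_nonneg] by (simp add: algebra_simps)
  qed
  also have "\<dots> < P + A is * t ^ r" using small t by simp
  also have "\<dots> \<le> polyform r n A y"
    unfolding P_def y_def
    by (rule polyform_max_const_gain[OF A "is"(1,2)]) (use x t in auto)
  finally have "P * S < polyform r n A y" .
  then have "P < polyform r n A (\<lambda>j. y j / S powr (1 / p))"
    using polyform_normalize_gt[of p r y n P A] p rp P_nonneg S(1) by (simp add: S_def)
  moreover have "pnorm n p (\<lambda>j. y j / S powr (1 / p)) = 1"
    using pnorm_normalize[of p y n] p S(1) by (simp add: S_def)
  ultimately show thesis using that unfolding P_def by blast
qed

theorem corollary12:
  fixes r n :: nat and p :: real and A :: "nat list \<Rightarrow> real" and x :: "nat \<Rightarrow> real"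
  assumes "2 \<le> r" and "real r < p"
    and "sym_matrix r n A" and "nonneg_matrix r n A" and "no_zero_slices r n A"
    and "\<forall>i<n. 0 \<le> x i" and "pnorm n p x = 1"
    and "polyform r n A x = lambda_p r n p A"
  shows "\<forall>i<n. 0 < x i"
proof (rule ccontr)
  assume "\<not> (\<forall>i<n. 0 < x i)"
  then obtain s where s: "s < n" "x s = 0" using assms(6) by force
  have "0 < r" "0 < p" using assms(1,2) by linarith+
  obtain "is" where "is": "is \<in> idx r n" "s \<in> set is" "0 < A is"
    using positive_entry_through_index[OF assms(4,5) \<open>0 < r\<close> s(1)] .
  obtain z where z: "pnorm n p z = 1" "polyform r n A x < polyform r n A z"
    using polyform_increases_at_zero_coordinate[OF \<open>0 < r\<close> assms(2,4) "is"] assms(6,7) s(2)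
    by blast
  have "polyform r n A z \<le> lambda_p r n p A"
    using polyform_le_lambda_p[OF \<open>0 < p\<close> z(1)] .
  then show False using z(2) assms(8) by simp
qed

end
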